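(* Let $\alpha \in [0,1)$ and $k \in \{0,\dots,m-1\}$, and let $\mathbf{S}_k = (S_k,\dots,S_k)$. For every monotone total order $T$ on $\Omega$, $$B_{T_h}^*(\mathbf{S}_k) \le B_T^*(\mathbf{S}_k) \le B_{T_\ell}^*(\mathbf{S}_k);$$ that is, among all pessimal bounds $B_T^*$ for monotone total orders $T$, the value at $\mathbf{S}_k$ is lowest for $T = T_h$ and highest for $T = T_\ell$.
   Context: Fix integers $m \ge 2$, $n \ge 1$ and reals $S_{\min} < S_{\max}$; $S = \{S_0,\dots,S_{m-1}\}$ with $S_k = S_{\min} + k\frac{S_{\max}-S_{\min}}{m-1}$. $\mathcal{F}$ is the set of probability distributions on $S$, identified with the probability simplex in $\mathbb{R}^m$ with the Euclidean topology; $E[F]$ is the mean. $\Omega$ is the set of samples of size $n$ from $S$, identified with their sorted versions $x_{(1)} \le \dots \le x_{(n)}$. $P_F[\Omega']$ is the probability that the sorted sample of $n$ i.i.d. draws from $F$ lies in $\Omega' \subseteq \Omega$; $\mathcal{G}(\Omega',\alpha) = \{F : P_F[\Omega'] > \alpha\}$ and $\mathcal{F}(\Omega',\alpha)$ is its closure. For a total order $T$ on $\Omega$, $\Omega(\mathbf{x},T) = \{\mathbf{y} : \mathbf{x} \le_T \mathbf{y}\}$ and the pessimal (conditionally optimal) bound is $B_T^*(\mathbf{x}) = \min\{E[F] : F \in \mathcal{F}(\Omega(\mathbf{x},T),\alpha)\}$ (standing assumption: the sets involved are nonempty). $\mathbf{x} \le \mathbf{y}$ means $x_{(j)} \le y_{(j)}$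 for all $j$; $T$ is monotone if $\mathbf{x} \le \mathbf{y}$ implies $\mathbf{x} \le_T \mathbf{y}$. $T_\ell$ (low lexicographic): $\mathbf{x} \le_{T_\ell} \mathbf{y}$ iff $\mathbf{x}=\mathbf{y}$ or at the smallest index $j$ with $x_{(j)} \ne y_{(j)}$ we have $x_{(j)} < y_{(j)}$. $T_h$ (high lexicographic): same with the largest such index. *)

theory Defs
  imports "HOL-Analysis.Analysis"
begin

definition Sval :: "nat \<Rightarrow> real \<Rightarrow> real \<Rightarrow> nat \<Rightarrow> real" where
  "Sval m Smin Smax k = Smin + real k * (Smax - Smin) / (real m - 1)"

definition Ssupp :: "nat \<Rightarrow> real \<Rightarrow> real \<Rightarrow> real set" where
  "Ssupp m Smin Smax = Sval m Smin Smax ` {..<m}"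

text \<open>Distributions on S: probability vectors (p 0, ..., p (m-1)), i.e. the simplex in R^m,
  embedded in nat => real (zero outside {..<m}) with the product topology, which on
  this set coincides with the Euclidean topology of R^m.\<close>
definition distrs :: "nat \<Rightarrow> (nat \<Rightarrow> real) set" where
  "distrs m = {p. (\<forall>i. 0 \<le> p i) \<and> (\<forall>i\<ge>m. p i = 0) \<and> (\<Sum>i<m. p i) = 1}"

definition mean :: "nat \<Rightarrow> real \<Rightarrow> real \<Rightarrow> (nat \<Rightarrow> real) \<Rightarrow> real" where
  "mean m Smin Smax p = (\<Sum>i<m. p i * Sval m Smin Smax i)"

text \<open>Samples of size n, identified with their sorted versions.\<close>
definition samples :: "nat \<Rightarrow> nat \<Rightarrow> real \<Rightarrow> real \<Rightarrow> real list set" where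
  "samples m n Smin Smax = {xs. length xs = n \<and> sorted xs \<and> set xs \<subseteq> Ssupp m Smin Smax}"

text \<open>Probability that the sorted sample of n i.i.d. draws from p lies in Om'.\<close>
definition probF :: "nat \<Rightarrow> nat \<Rightarrow> real \<Rightarrow> real \<Rightarrow> (nat \<Rightarrow> real) \<Rightarrow> real list set \<Rightarrow> real" where
  "probF m n Smin Smax p Om' =
     (\<Sum>ys \<in> {ys. set ys \<subseteq> {..<m} \<and> length ys = n}.
        if sort (map (Sval m Smin Smax) ys) \<in> Om' then prod_list (map p ys) else 0)"

definition Gset :: "nat \<Rightarrow> nat \<Rightarrow> real \<Rightarrow> real \<Rightarrow> real list set \<Rightarrow> real \<Rightarrow> (nat \<Rightarrow> real) set" where
  "Gset m n Smin Smax Om' \<alpha> = {p \<in> distrs m. probF m n Smin Smax p Om' > \<alpha>}"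

definition Fset :: "nat \<Rightarrow> nat \<Rightarrow> real \<Rightarrow> real \<Rightarrow> real list set \<Rightarrow> real \<Rightarrow> (nat \<Rightarrow> real) set" where
  "Fset m n Smin Smax Om' \<alpha> = closure (Gset m n Smin Smax Om' \<alpha>)"

definition upset :: "real list set \<Rightarrow> (real list \<times> real list) set \<Rightarrow> real list \<Rightarrow> real list set" where
  "upset Om T x = {y \<in> Om. (x, y) \<in> T}"

definition pess_bound :: "nat \<Rightarrow> nat \<Rightarrow> real \<Rightarrow> real \<Rightarrow> real \<Rightarrow> (real list \<times> real list) set \<Rightarrow> real list \<Rightarrow> real" where
  "pess_bound m n Smin Smax \<alpha> T x =
     Inf (mean m Smin Smax ` Fset m n Smin Smax (upset (samples m n Smin Smax) T x) \<alpha>)"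

definition monotone_order :: "real list set \<Rightarrow> (real list \<times> real list) set \<Rightarrow> bool" where
  "monotone_order Om T \<longleftrightarrow>
     (\<forall>x\<in>Om. \<forall>y\<in>Om. (\<forall>j<length x. x ! j \<le> y ! j) \<longrightarrow> (x, y) \<in> T)"

definition T_low :: "real list set \<Rightarrow> (real list \<times> real list) set" where
  "T_low Om = {(x, y). x \<in> Om \<and> y \<in> Om \<and>
     (x = y \<or> (\<exists>j<length x. (\<forall>i<j. x ! i = y ! i) \<and> x ! j < y ! j))}"

definition T_high :: "real list set \<Rightarrow> (real list \<times> real list) set" where
  "T_high Om = {(x, y). x \<in> Om \<and> y \<in> Om \<and>
     (x = y \<or> (\<exists>j<length x. (\<forall>i. j < i \<and> i < length x \<longrightarrow> x ! i = y ! i) \<and> x ! j < y ! j))}"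

end

theory Submission
  imports Defs
begin

text \<open>For a constant sample \<open>x = (S\<^sub>k, \<dots>, S\<^sub>k)\<close> the up-sets are nested,
  \<open>\<Omega>(x,T\<^sub>\<ell>) \<subseteq> \<Omega>(x,T) \<subseteq> \<Omega>(x,T\<^sub>h)\<close>, for every monotone total order \<open>T\<close>:
  a sorted sample above \<open>x\<close> in the low lexicographic order dominates \<open>x\<close> componentwise,
  and a sample above \<open>x\<close> in \<open>T\<close> either has some (hence its last) entry above \<open>S\<^sub>k\<close>, which
  puts it above \<open>x\<close> in the high lexicographic order, or is dominated by \<open>x\<close> and then equals
  \<open>x\<close> by antisymmetry. Enlarging \<open>\<Omega>'\<close> enlarges \<open>P\<^sub>F[\<Omega>']\<close>, hence \<open>\<F>(\<Omega>',\<alpha>)\<close>, hence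
  lowers the minimal mean over it.\<close>

lemma Sval_ge_Smin:
  assumes "m \<ge> 2" "Smin < Smax"
  shows "Smin \<le> Sval m Smin Smax i"
  using assms unfolding Sval_def by simp

lemma continuous_on_mean: "continuous_on UNIV (mean m Smin Smax)"
  unfolding mean_def
  by (intro continuous_intros continuous_on_product_then_coordinatewise continuous_on_id)

lemma mean_ge_Smin:
  assumes "m \<ge> 2" "Smin < Smax" "p \<in> distrs m"
  shows "Smin \<le> mean m Smin Smax p"
proof -
  have "Smin = (\<Sum>i<m. p i * Smin)"
    using assms(3) unfolding distrs_def by (simp add: sum_distrib_right[symmetric])
  also have "\<dots> \<le> mean m Smin Smax p"
    using assms(3) Sval_ge_Smin[OF assms(1,2)] unfolding mean_def distrs_def
    by (intro sum_mono mult_left_mono) auto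
  finally show ?thesis .
qed

lemma Fset_subset_mean_ge_Smin:
  assumes "m \<ge> 2" "Smin < Smax"
  shows "Fset m n Smin Smax A \<alpha> \<subseteq> {p. Smin \<le> mean m Smin Smax p}"
  unfolding Fset_def
proof (rule closure_minimal)
  show "Gset m n Smin Smax A \<alpha> \<subseteq> {p. Smin \<le> mean m Smin Smax p}"
    using mean_ge_Smin[OF assms] unfolding Gset_def by auto
  show "closed {p. Smin \<le> mean m Smin Smax p}"
    by (rule closed_Collect_le) (auto intro: continuous_on_mean)
qed

lemma probF_mono:
  assumes "p \<in> distrs m" "A \<subseteq> B"
  shows "probF m n Smin Smax p A \<le> probF m n Smin Smax p B"
  unfolding probF_def using assms
  by (intro sum_mono) (auto intro!: prod_list_nonneg simp: distrs_def)

lemma Fset_mono: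
  assumes "A \<subseteq> B"
  shows "Fset m n Smin Smax A \<alpha> \<subseteq> Fset m n Smin Smax B \<alpha>"
  unfolding Fset_def Gset_def
  using probF_mono[OF _ assms, of _ m n Smin Smax] by (intro closure_mono) fastforce

lemma point_mass_in_Gset:
  assumes "j < m" "\<alpha> < 1" "replicate n (Sval m Smin Smax j) \<in> A"
  shows "(\<lambda>i. if i = j then 1 else 0) \<in> Gset m n Smin Smax A \<alpha>"
proof -
  define p :: "nat \<Rightarrow> real" where "p = (\<lambda>i. if i = j then 1 else 0)"
  define L where "L = {ys. set ys \<subseteq> {..<m} \<and> length ys = n}"
  have p_distr: "p \<in> distrs m"
    using assms(1) unfolding distrs_def p_def by (auto simp: sum.delta)
  have "replicate n j \<in> L" "finite L"
    using assms(1) finite_lists_length_eq[of "{..<m}" n] unfolding L_def by auto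
  moreover have "sort (map (Sval m Smin Smax) (replicate n j)) = replicate n (Sval m Smin Smax j)"
    by (simp add: sorted_sort_id)
  ultimately have "1 \<le> probF m n Smin Smax p A"
    using assms(3) p_distr unfolding probF_def L_def[symmetric]
    by (intro member_le_sum[of "replicate n j", THEN order_trans[rotated]])
       (auto intro!: prod_list_nonneg simp: distrs_def p_def)
  then show ?thesis
    using p_distr assms(2) unfolding Gset_def p_def by auto
qed

text \<open>The real \<^const>\<open>Inf\<close> is junk on empty or unbounded sets; the point-mass sample
  makes the smaller \<open>\<F>\<close> nonempty, and \<open>Smin\<close> bounds the means from below.\<close>

lemma pess_bound_antimono:
  assumes "m \<ge> 2" "Smin < Smax" "\<alpha> < 1" "j < m"
    and "replicate n (Sval m Smin Smax j) \<in> upset (samples m n Smin Smax) T x"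
    and "upset (samples m n Smin Smax) T x \<subseteq> upset (samples m n Smin Smax) T' x"
  shows "pess_bound m n Smin Smax \<alpha> T' x \<le> pess_bound m n Smin Smax \<alpha> T x"
  unfolding pess_bound_def
proof (rule cInf_superset_mono)
  show "mean m Smin Smax ` Fset m n Smin Smax (upset (samples m n Smin Smax) T x) \<alpha> \<noteq> {}"
    using point_mass_in_Gset[OF assms(4,3,5)] closure_subset unfolding Fset_def by blast
  show "bdd_below (mean m Smin Smax ` Fset m n Smin Smax (upset (samples m n Smin Smax) T' x) \<alpha>)"
    using Fset_subset_mean_ge_Smin[OF assms(1,2)] unfolding bdd_below_def by blast
  show "mean m Smin Smax ` Fset m n Smin Smax (upset (samples m n Smin Smax) T x) \<alpha>
      \<subseteq> mean m Smin Smax ` Fset m n Smin Smax (upset (samples m n Smin Smax) T' x) \<alpha>"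
    using Fset_mono[OF assms(6)] by (rule image_mono)
qed

lemma replicate_Sval_in_samples:
  "k < m \<Longrightarrow> replicate n (Sval m Smin Smax k) \<in> samples m n Smin Smax"
  unfolding samples_def Ssupp_def by auto

lemma T_low_replicate_imp_le:
  assumes "sorted y" "length y = n" "(replicate n s, y) \<in> T_low Om"
  shows "\<forall>i<n. s \<le> y ! i"
proof (cases "y = replicate n s")
  case False
  then obtain j where j: "j < n" "\<forall>i<j. s = y ! i" "s < y ! j"
    using assms(3) unfolding T_low_def by auto
  show ?thesis
  proof (intro allI impI)
    fix i assume "i < n"
    then show "s \<le> y ! i"
      using j assms(1,2) sorted_nth_mono[of y j i] by (cases "i < j") auto
  qed
qed simp

lemma upset_T_low_subset_upset:
  assumes "monotone_order Om T" "\<forall>y\<in>Om. sorted y \<and> length y = n" "replicate n s \<in> Om"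
  shows "upset Om (T_low Om) (replicate n s) \<subseteq> upset Om T (replicate n s)"
proof
  fix y assume "y \<in> upset Om (T_low Om) (replicate n s)"
  then have y: "y \<in> Om" "(replicate n s, y) \<in> T_low Om" unfolding upset_def by auto
  then have "\<forall>j<length (replicate n s). replicate n s ! j \<le> y ! j"
    using assms(2) T_low_replicate_imp_le by auto
  then show "y \<in> upset Om T (replicate n s)"
    using assms(1,3) y(1) unfolding upset_def monotone_order_def by blast
qed

lemma upset_subset_upset_T_high:
  assumes "antisym T" "monotone_order Om T" "\<forall>y\<in>Om. sorted y \<and> length y = n"
    and "replicate n s \<in> Om"
  shows "upset Om T (replicate n s) \<subseteq> upset Om (T_high Om) (replicate n s)"
proof
  fix y assume "y \<in> upset Om T (replicate n s)"
  then have y: "y \<in> Om" "(replicate n s, y) \<in> T" unfolding upset_def by auto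
  then have y_sorted: "sorted y" "length y = n" using assms(3) by auto
  have "y = replicate n s \<or> n \<noteq> 0 \<and> s < y ! (n - 1)"
  proof (cases "\<exists>j<n. s < y ! j")
    case True
    then obtain j where "j < n" "s < y ! j" by blast
    moreover have "y ! j \<le> y ! (n - 1)"
      using \<open>j < n\<close> y_sorted by (intro sorted_nth_mono) auto
    ultimately show ?thesis by simp
  next
    case False
    have "\<forall>j<length y. y ! j \<le> replicate n s ! j"
    proof (intro allI impI)
      fix j assume "j < length y"
      then show "y ! j \<le> replicate n s ! j" using False y_sorted by auto
    qed
    then have "(y, replicate n s) \<in> T"
      using assms(2,4) y(1) unfolding monotone_order_def by blast
    then show ?thesis using y(2) assms(1) unfolding antisym_def by blast
  qed
  then show "y \<in> upset Om (T_high Om) (replicate n s)"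
    using y(1) assms(4) unfolding upset_def T_high_def by (auto intro!: exI[of _ "n - 1"])
qed

theorem corollary1:
  fixes m n k :: nat and Smin Smax \<alpha> :: real and T :: "(real list \<times> real list) set"
  assumes "m \<ge> 2" and "n \<ge> 1" and "Smin < Smax"
    and "0 \<le> \<alpha>" and "\<alpha> < 1" and "k < m"
    and "linear_order_on (samples m n Smin Smax) T"
    and "monotone_order (samples m n Smin Smax) T"
  shows "pess_bound m n Smin Smax \<alpha> (T_high (samples m n Smin Smax))
             (replicate n (Sval m Smin Smax k))
           \<le> pess_bound m n Smin Smax \<alpha> T (replicate n (Sval m Smin Smax k))
       \<and> pess_bound m n Smin Smax \<alpha> T (replicate n (Sval m Smin Smax k))
           \<le> pess_bound m n Smin Smax \<alpha> (T_low (samples m n Smin Smax))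
             (replicate n (Sval m Smin Smax k))"
proof -
  define Om where "Om = samples m n Smin Smax"
  define x where "x = replicate n (Sval m Smin Smax k)"
  have x_in: "x \<in> Om" unfolding x_def Om_def using assms(6) by (rule replicate_Sval_in_samples)
  have Om_sorted: "\<forall>y\<in>Om. sorted y \<and> length y = n" unfolding Om_def samples_def by auto
  have "antisym T" using assms(7) unfolding linear_order_on_def partial_order_on_def by blast
  have low_sub: "upset Om (T_low Om) x \<subseteq> upset Om T x"
    using upset_T_low_subset_upset[OF assms(8)[folded Om_def] Om_sorted] x_in unfolding x_def by blast
  have high_sup: "upset Om T x \<subseteq> upset Om (T_high Om) x"
    using upset_subset_upset_T_high[OF \<open>antisym T\<close> assms(8)[folded Om_def] Om_sorted] x_in
    unfolding x_def by blast
  have x_in_low: "x \<in> upset Om (T_low Om) x" using x_in unfolding upset_def T_low_def by simp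
  have "pess_bound m n Smin Smax \<alpha> (T_high Om) x \<le> pess_bound m n Smin Smax \<alpha> T x"
    by (rule pess_bound_antimono[OF assms(1,3,5,6), where n = n, folded x_def Om_def])
       (use low_sub high_sup x_in_low in auto)
  moreover have "pess_bound m n Smin Smax \<alpha> T x \<le> pess_bound m n Smin Smax \<alpha> (T_low Om) x"
    by (rule pess_bound_antimono[OF assms(1,3,5,6), where n = n, folded x_def Om_def])
       (use low_sub x_in_low in auto)
  ultimately show ?thesis unfolding Om_def x_def by simp
qed

end
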